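(* Let $M$ be a Banach manifold, $K\in C^\infty(M\times M,\mathbb C)$ a smooth positive definite kernel with reproducing kernel Hilbert space $\mathcal H_K\subseteq C^\infty(M,\mathbb C)$, and $V$ a $K$-symmetric vector field on $M$ with local flow $\phi^V_t$. Then for every $m\in M$, \[\mathcal L_VK_m=\frac{d}{dt}\Big|_{t=0}K_{\phi^V_t m}\in\mathcal H_K\] (derivative in $\mathcal H_K$). In particular $\mathcal H_K^0\subseteq\mathcal D_V$ and $\mathcal L_V|_{\mathcal H_K^0}$ is symmetric. Moreover, for every $\varphi\in\mathcal H_K$ and $m\in M$, $\langle\varphi,\mathcal L_VK_m\rangle=(\mathcal L_V\varphi)(m)$.
   Context: $\mathcal H_K$ is the Hilbert space of functions on $M$ with $f(m)=\langle f,K_m\rangle$, where $K_m(x)=K(x,m)$ and the inner product is linear in the first argument; $\mathcal H_K^0$ is the span of $\{K_m:m\in M\}$. For a vector field $V$, $(\mathcal L_V\varphi)(m)=\frac{d}{dt}|_{t=0}\varphi(\phi^V_t m)$, and $\mathcal D_V:=\{\varphi\in\mathcal H_K:\mathcal L_V\varphi\in\mathcal H_K\}$. $V$ is $K$-symmetric if $(\mathcal L_VK_m)(n)=\overline{(\mathcal L_VK_n)(m)}$ for all $m,n\in M$. *)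

theory Defs
  imports "HOL-Analysis.Analysis"
begin

text \<open>The k-th derivative at a point is represented as a bounded k-multilinear map,
encoded as a function on lists of length k of directions.\<close>

definition mlnorm :: "nat \<Rightarrow> ('a::real_normed_vector list \<Rightarrow> 'b::real_normed_vector) \<Rightarrow> real" where
  "mlnorm k A = (SUP vs \<in> {vs. length vs = k \<and> (\<forall>v\<in>set vs. norm v \<le> 1)}. norm (A vs))"

definition bounded_multilinear_k :: "nat \<Rightarrow> ('a::real_normed_vector list \<Rightarrow> 'b::real_normed_vector) \<Rightarrow> bool" where
  "bounded_multilinear_k k A \<longleftrightarrow>
     (\<forall>vs i. length vs = k \<and> i < k \<longrightarrow> linear (\<lambda>h. A (vs[i := h]))) \<and>
     (\<exists>C. \<forall>vs. length vs = k \<longrightarrow> norm (A vs) \<le> C * prod_list (map norm vs))"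

definition smooth_on :: "'a::real_normed_vector set \<Rightarrow> ('a \<Rightarrow> 'b::real_normed_vector) \<Rightarrow> bool" where
  "smooth_on S f \<longleftrightarrow> open S \<and>
     (\<exists>F :: nat \<Rightarrow> 'a \<Rightarrow> 'a list \<Rightarrow> 'b.
        (\<forall>x\<in>S. F 0 x [] = f x) \<and>
        (\<forall>k. \<forall>x\<in>S. bounded_multilinear_k k (F k x) \<and>
           ((\<lambda>y. mlnorm k (\<lambda>vs. F k y vs - F k x vs - F (Suc k) x ((y - x) # vs)) / norm (y - x))
               \<longlongrightarrow> 0) (at x) \<and>
           ((\<lambda>y. mlnorm (Suc k) (\<lambda>vs. F (Suc k) y vs - F (Suc k) x vs)) \<longlongrightarrow> 0) (at x)))"

section \<open>Banach manifolds (the manifold is the whole type 'm with its topology)\<close>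

type_synonym ('m, 'e) chart = "'m set \<times> ('m \<Rightarrow> 'e)"

definition banach_manifold :: "('m::topological_space, 'e::banach) chart set \<Rightarrow> bool" where
  "banach_manifold A \<longleftrightarrow>
     (\<forall>(U,\<psi>)\<in>A. open U \<and> open (\<psi> ` U) \<and> (\<exists>g. homeomorphism U (\<psi> ` U) \<psi> g)) \<and>
     \<Union>(fst ` A) = UNIV \<and>
     (\<forall>(U,\<psi>)\<in>A. \<forall>(V,\<rho>)\<in>A. smooth_on (\<psi> ` (U \<inter> V)) (\<rho> \<circ> inv_into U \<psi>))"

definition smooth_fun :: "('m, 'e::real_normed_vector) chart set \<Rightarrow> ('m \<Rightarrow> 'b::real_normed_vector) \<Rightarrow> bool" where
  "smooth_fun A f \<longleftrightarrow> (\<forall>(U,\<psi>)\<in>A. smooth_on (\<psi> ` U) (f \<circ> inv_into U \<psi>))"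

definition smooth_kernel :: "('m, 'e::real_normed_vector) chart set \<Rightarrow> ('m \<Rightarrow> 'm \<Rightarrow> 'b::real_normed_vector) \<Rightarrow> bool" where
  "smooth_kernel A K \<longleftrightarrow> (\<forall>(U,\<psi>)\<in>A. \<forall>(V,\<rho>)\<in>A.
      smooth_on (\<psi> ` U \<times> \<rho> ` V) (\<lambda>(x,y). K (inv_into U \<psi> x) (inv_into V \<rho> y)))"

text \<open>A smooth vector field, given by its local representatives v c in each chart c,
compatible under the derivatives of the transition maps.\<close>
definition vector_field :: "('m, 'e::real_normed_vector) chart set \<Rightarrow> (('m, 'e) chart \<Rightarrow> 'e \<Rightarrow> 'e) \<Rightarrow> bool" where
  "vector_field A v \<longleftrightarrow>
     (\<forall>(U,\<psi>)\<in>A. smooth_on (\<psi> ` U) (v (U,\<psi>))) \<and>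
     (\<forall>(U,\<psi>)\<in>A. \<forall>(V,\<rho>)\<in>A. \<forall>x\<in>U \<inter> V. \<forall>D.
        ((\<rho> \<circ> inv_into U \<psi>) has_derivative D) (at (\<psi> x)) \<longrightarrow> D (v (U,\<psi>) (\<psi> x)) = v (V,\<rho>) (\<rho> x))"

definition local_flow :: "('m::topological_space, 'e::real_normed_vector) chart set \<Rightarrow> (('m, 'e) chart \<Rightarrow> 'e \<Rightarrow> 'e)
     \<Rightarrow> (real \<Rightarrow> 'm \<Rightarrow> 'm) \<Rightarrow> bool" where
  "local_flow A v \<phi> \<longleftrightarrow> (\<forall>m. \<phi> 0 m = m \<and>
     (\<exists>\<epsilon>>0. continuous_on {-\<epsilon><..<\<epsilon>} (\<lambda>t. \<phi> t m) \<and>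
        (\<forall>t\<in>{-\<epsilon><..<\<epsilon>}. \<forall>(U,\<psi>)\<in>A. \<phi> t m \<in> U \<longrightarrow>
           ((\<lambda>s. \<psi> (\<phi> s m)) has_vector_derivative v (U,\<psi>) (\<psi> (\<phi> t m))) (at t))))"

definition lie :: "(real \<Rightarrow> 'm \<Rightarrow> 'm) \<Rightarrow> ('m \<Rightarrow> complex) \<Rightarrow> ('m \<Rightarrow> complex)" where
  "lie \<phi> f = (\<lambda>m. vector_derivative (\<lambda>t. f (\<phi> t m)) (at (0::real)))"

definition K_symmetric :: "(real \<Rightarrow> 'm \<Rightarrow> 'm) \<Rightarrow> ('m \<Rightarrow> 'm \<Rightarrow> complex) \<Rightarrow> bool" where
  "K_symmetric \<phi> K \<longleftrightarrow> (\<forall>m n. lie \<phi> (\<lambda>x. K x m) n = cnj (lie \<phi> (\<lambda>x. K x n) m))"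

definition pos_def_kernel :: "('m \<Rightarrow> 'm \<Rightarrow> complex) \<Rightarrow> bool" where
  "pos_def_kernel K \<longleftrightarrow> (\<forall>(n::nat) (c::nat \<Rightarrow> complex) (ms::nat \<Rightarrow> 'm).
      Im (\<Sum>i<n. \<Sum>j<n. cnj (c i) * c j * K (ms i) (ms j)) = 0 \<and>
      Re (\<Sum>i<n. \<Sum>j<n. cnj (c i) * c j * K (ms i) (ms j)) \<ge> 0)"

definition hnorm :: "(('m \<Rightarrow> complex) \<Rightarrow> ('m \<Rightarrow> complex) \<Rightarrow> complex) \<Rightarrow> ('m \<Rightarrow> complex) \<Rightarrow> real" where
  "hnorm ip f = sqrt (Re (ip f f))"

text \<open>(H, ip) is a complex Hilbert space of functions M -> C (inner product linear in the
first argument) with reproducing kernel K: K_m = (\<lambda>x. K x m) \<in> H and f m = ip f K_m.\<close>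
definition rkhs :: "('m \<Rightarrow> 'm \<Rightarrow> complex) \<Rightarrow> ('m \<Rightarrow> complex) set
     \<Rightarrow> (('m \<Rightarrow> complex) \<Rightarrow> ('m \<Rightarrow> complex) \<Rightarrow> complex) \<Rightarrow> bool" where
  "rkhs K H ip \<longleftrightarrow>
     (\<lambda>x. 0) \<in> H \<and>
     (\<forall>f\<in>H. \<forall>g\<in>H. (\<lambda>x. f x + g x) \<in> H) \<and>
     (\<forall>c. \<forall>f\<in>H. (\<lambda>x. c * f x) \<in> H) \<and>
     (\<forall>f\<in>H. \<forall>g\<in>H. \<forall>h\<in>H. ip (\<lambda>x. f x + g x) h = ip f h + ip g h) \<and>
     (\<forall>c. \<forall>f\<in>H. \<forall>g\<in>H. ip (\<lambda>x. c * f x) g = c * ip f g) \<and>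
     (\<forall>f\<in>H. \<forall>g\<in>H. ip g f = cnj (ip f g)) \<and>
     (\<forall>f\<in>H. Re (ip f f) \<ge> 0 \<and> (ip f f = 0 \<longrightarrow> f = (\<lambda>x. 0))) \<and>
     (\<forall>X. (\<forall>n. X n \<in> H) \<and>
          (\<forall>e>0. \<exists>N. \<forall>m\<ge>N. \<forall>n\<ge>N. hnorm ip (\<lambda>x. X m x - X n x) < e) \<longrightarrow>
          (\<exists>f\<in>H. (\<lambda>n. hnorm ip (\<lambda>x. X n x - f x)) \<longlonglongrightarrow> 0)) \<and>
     (\<forall>m. (\<lambda>x. K x m) \<in> H) \<and>
     (\<forall>f\<in>H. \<forall>m. f m = ip f (\<lambda>x. K x m))"

text \<open>H_K^0: the linear span of the kernel functions K_m.\<close>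
definition kspan :: "('m \<Rightarrow> 'm \<Rightarrow> complex) \<Rightarrow> ('m \<Rightarrow> complex) set" where
  "kspan K = {f. \<exists>(n::nat) (c::nat \<Rightarrow> complex) (ms::nat \<Rightarrow> 'm). f = (\<lambda>x. \<Sum>j<n. c j * K x (ms j))}"

text \<open>D_V = {f in H. L_V f in H}.\<close>
definition lie_domain :: "('m \<Rightarrow> complex) set \<Rightarrow> (real \<Rightarrow> 'm \<Rightarrow> 'm) \<Rightarrow> ('m \<Rightarrow> complex) set" where
  "lie_domain H \<phi> = {f\<in>H. lie \<phi> f \<in> H}"

definition H_has_derivative_at0 :: "(('m \<Rightarrow> complex) \<Rightarrow> ('m \<Rightarrow> complex) \<Rightarrow> complex)
     \<Rightarrow> (real \<Rightarrow> 'm \<Rightarrow> complex) \<Rightarrow> ('m \<Rightarrow> complex) \<Rightarrow> bool" where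
  "H_has_derivative_at0 ip \<gamma> D \<longleftrightarrow>
     ((\<lambda>t. hnorm ip (\<lambda>x. (\<gamma> t x - \<gamma> 0 x) / complex_of_real t - D x)) \<longlongrightarrow> 0) (at (0::real))"

end

theory Submission
  imports Defs
begin

text \<open>
  Fix \<open>m\<close> and consider the curve \<open>\<gamma> t = K\<^sub>\<phi>\<^sub>t\<^sub>m\<close> in \<open>H\<^sub>K\<close>. Its Gram function
  \<open>\<langle>\<gamma> s, \<gamma> t\<rangle> = K(\<phi>\<^sub>t m, \<phi>\<^sub>s m)\<close> is, in a chart, a \<open>C\<^sup>2\<close> function composed with the
  integral curve of \<open>V\<close>, so its second mixed difference at \<open>(0,0)\<close> is \<open>s t L + o(|s| |t|)\<close>.
  Expanding \<open>\<parallel>q s - q t\<parallel>\<^sup>2\<close> for the difference quotients \<open>q t = (\<gamma> t - \<gamma> 0) / t\<close> in terms of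
  the Gram function shows that they are Cauchy, so \<open>\<gamma>\<close> has a derivative \<open>D\<^sub>m \<in> H\<^sub>K\<close>.
  By continuity of the inner product and the reproducing property,
  \<open>\<langle>f, D\<^sub>m\<rangle> = d/dt f(\<phi>\<^sub>t m) = (\<L>\<^sub>V f)(m)\<close>; evaluating \<open>D\<^sub>m\<close> at \<open>n\<close> and using
  \<open>K\<close>-symmetry identifies \<open>D\<^sub>m\<close> with \<open>\<L>\<^sub>V K\<^sub>m\<close>. The statements about \<open>H\<^sub>K\<^sup>0\<close> then
  follow by linearity.
\<close>

lemma mlnorm_0: "mlnorm 0 A = norm (A [])"
proof -
  have eq: "{vs. length vs = 0 \<and> (\<forall>v\<in>set vs. norm v \<le> 1)} = {[]}" by auto
  show ?thesis unfolding mlnorm_def eq by simp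
qed

lemma mlnorm_zero: "mlnorm k (\<lambda>vs. 0) = 0"
proof -
  have "{vs. length vs = k \<and> (\<forall>v\<in>set vs. norm v \<le> 1)} \<noteq> {}"
    by (auto intro: exI[of _ "replicate k 0"])
  then show ?thesis unfolding mlnorm_def norm_zero by (rule cSUP_const)
qed

lemma norm_le_mlnorm:
  assumes "\<And>vs. length vs = k \<Longrightarrow> \<forall>v\<in>set vs. norm v \<le> 1 \<Longrightarrow> norm (A vs) \<le> B"
    and "length vs = k" "\<forall>v\<in>set vs. norm v \<le> 1"
  shows "norm (A vs) \<le> mlnorm k A"
  unfolding mlnorm_def
  by (rule cSUP_upper) (use assms in \<open>auto intro!: bdd_aboveI2[where M=B]\<close>)

lemma norm_le_mlnorm_1:
  fixes A :: "'a::real_normed_vector list \<Rightarrow> 'b::real_normed_vector"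
  assumes lin: "linear (\<lambda>h. A [h])" and bound: "\<And>w. norm (A [w]) \<le> C * norm w"
  shows "norm (A [w]) \<le> mlnorm 1 A * norm w"
proof (cases "w = 0")
  case True
  then show ?thesis using linear_0[OF lin] by simp
next
  case False
  define u where "u = w /\<^sub>R norm w"
  have u: "norm u \<le> 1" using False by (simp add: u_def)
  have "A [w] = norm w *\<^sub>R A [u]"
    using linear_scale[OF lin, of "norm w" u] False by (simp add: u_def)
  moreover have "norm (A [u]) \<le> mlnorm 1 A"
  proof (rule norm_le_mlnorm[where B="\<bar>C\<bar>"])
    fix vs :: "'a list" assume "length vs = 1" "\<forall>v\<in>set vs. norm v \<le> 1"
    then obtain v where "vs = [v]" "norm v \<le> 1" by (auto simp: length_Suc_conv)
    moreover have "C * norm v \<le> \<bar>C\<bar> * norm v" by (simp add: mult_right_mono)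
    moreover have "\<bar>C\<bar> * norm v \<le> \<bar>C\<bar>" using \<open>norm v \<le> 1\<close> by (simp add: mult_left_le)
    ultimately show "norm (A vs) \<le> \<bar>C\<bar>"
      using bound[of v] by auto
  qed (use u in auto)
  ultimately show ?thesis by (simp add: mult.commute mult_left_mono)
qed

lemma norm_le_mlnorm_2:
  fixes A :: "'a::real_normed_vector list \<Rightarrow> 'b::real_normed_vector"
  assumes lin1: "\<And>b. linear (\<lambda>h. A [h, b])" and lin2: "\<And>a. linear (\<lambda>h. A [a, h])"
    and bound: "\<And>a b. norm (A [a, b]) \<le> C * norm a * norm b"
  shows "norm (A [a, b]) \<le> mlnorm 2 A * norm a * norm b"
proof (cases "a = 0 \<or> b = 0")
  case True
  then show ?thesis using linear_0[OF lin1[of b]] linear_0[OF lin2[of a]] by auto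
next
  case False
  define a' where "a' = a /\<^sub>R norm a"
  define b' where "b' = b /\<^sub>R norm b"
  have unit: "norm a' \<le> 1" "norm b' \<le> 1" using False by (auto simp: a'_def b'_def)
  have "A [a, b] = norm a *\<^sub>R A [a', b]"
    using linear_scale[OF lin1[of b], of "norm a" a'] False by (simp add: a'_def)
  also have "A [a', b] = norm b *\<^sub>R A [a', b']"
    using linear_scale[OF lin2[of a'], of "norm b" b'] False by (simp add: b'_def)
  finally have eq: "A [a, b] = (norm a * norm b) *\<^sub>R A [a', b']" by simp
  have "norm (A [a', b']) \<le> mlnorm 2 A"
  proof (rule norm_le_mlnorm[where B="\<bar>C\<bar>"])
    fix vs :: "'a list" assume "length vs = 2" "\<forall>v\<in>set vs. norm v \<le> 1"
    then obtain x y where "vs = [x, y]" "norm x \<le> 1" "norm y \<le> 1"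
      by (auto simp: length_Suc_conv numeral_2_eq_2)
    moreover have "C * norm x * norm y \<le> \<bar>C\<bar> * norm x * norm y"
      by (simp add: mult_right_mono)
    moreover have "\<bar>C\<bar> * norm x * norm y \<le> \<bar>C\<bar>" if "norm x \<le> 1" "norm y \<le> 1"
      using that by (simp add: mult.assoc mult_left_le mult_le_one)
    ultimately show "norm (A vs) \<le> \<bar>C\<bar>"
      using bound[of x y] by auto
  qed (use unit in \<open>auto simp: numeral_2_eq_2\<close>)
  then have "(norm a * norm b) * norm (A [a', b']) \<le> (norm a * norm b) * mlnorm 2 A"
    by (simp add: mult_left_mono)
  then show ?thesis unfolding eq by (simp add: ac_simps)
qed

lemma bounded_multilinear_k_1D:
  assumes "bounded_multilinear_k 1 A"
  shows "linear (\<lambda>h. A [h])" "\<exists>C. \<forall>w. norm (A [w]) \<le> C * norm w"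
proof -
  have "\<And>vs i. length vs = 1 \<Longrightarrow> i < 1 \<Longrightarrow> linear (\<lambda>h. A (vs[i := h]))"
    using assms unfolding bounded_multilinear_k_def by blast
  from this[of "[0]" 0] show "linear (\<lambda>h. A [h])" by simp
  obtain C where "\<And>vs. length vs = 1 \<Longrightarrow> norm (A vs) \<le> C * prod_list (map norm vs)"
    using assms unfolding bounded_multilinear_k_def by blast
  from this[of "[w]" for w] show "\<exists>C. \<forall>w. norm (A [w]) \<le> C * norm w" by auto
qed

lemma bounded_multilinear_k_2D:
  assumes "bounded_multilinear_k 2 A"
  shows "linear (\<lambda>h. A [h, b])" "linear (\<lambda>h. A [a, h])"
    "\<exists>C. \<forall>a b. norm (A [a, b]) \<le> C * norm a * norm b"
proof -
  have lin: "\<And>vs i. length vs = 2 \<Longrightarrow> i < 2 \<Longrightarrow> linear (\<lambda>h. A (vs[i := h]))"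
    using assms unfolding bounded_multilinear_k_def by blast
  show "linear (\<lambda>h. A [h, b])" using lin[of "[0, b]" 0] by simp
  show "linear (\<lambda>h. A [a, h])" using lin[of "[a, 0]" 1] by simp
  obtain C where "\<And>vs. length vs = 2 \<Longrightarrow> norm (A vs) \<le> C * prod_list (map norm vs)"
    using assms unfolding bounded_multilinear_k_def by blast
  from this[of "[a, b]" for a b] show "\<exists>C. \<forall>a b. norm (A [a, b]) \<le> C * norm a * norm b"
    by (auto simp: mult.assoc)
qed

definition frechet_tower :: "'a::real_normed_vector set \<Rightarrow> ('a \<Rightarrow> 'b::real_normed_vector)
    \<Rightarrow> (nat \<Rightarrow> 'a \<Rightarrow> 'a list \<Rightarrow> 'b) \<Rightarrow> bool" where
  "frechet_tower S f F \<longleftrightarrow>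
     (\<forall>x\<in>S. F 0 x [] = f x) \<and>
     (\<forall>k. \<forall>x\<in>S. bounded_multilinear_k k (F k x) \<and>
        ((\<lambda>y. mlnorm k (\<lambda>vs. F k y vs - F k x vs - F (Suc k) x ((y - x) # vs)) / norm (y - x))
            \<longlongrightarrow> 0) (at x) \<and>
        ((\<lambda>y. mlnorm (Suc k) (\<lambda>vs. F (Suc k) y vs - F (Suc k) x vs)) \<longlongrightarrow> 0) (at x))"

lemma smooth_on_iff_frechet_tower: "smooth_on S f \<longleftrightarrow> open S \<and> (\<exists>F. frechet_tower S f F)"
  unfolding smooth_on_def frechet_tower_def by (rule refl)

lemma bounded_linearI_linear:
  assumes "linear f" "\<And>x. norm (f x) \<le> C * norm x"
  shows "bounded_linear f"
  unfolding bounded_linear_def bounded_linear_axioms_def using assms by (metis mult.commute)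

context
  fixes S :: "'a::real_normed_vector set" and f :: "'a \<Rightarrow> 'b::real_normed_vector" and F
  assumes tower: "frechet_tower S f F" and S: "open S"
begin

lemma frechet_tower_0: "y \<in> S \<Longrightarrow> F 0 y [] = f y"
  using tower unfolding frechet_tower_def by blast

lemma frechet_tower_remainder:
  "x \<in> S \<Longrightarrow> ((\<lambda>y. mlnorm k (\<lambda>vs. F k y vs - F k x vs - F (Suc k) x ((y - x) # vs)) / norm (y - x))
      \<longlongrightarrow> 0) (at x)"
  using tower unfolding frechet_tower_def by blast

lemma frechet_tower_continuous:
  "x \<in> S \<Longrightarrow> ((\<lambda>y. mlnorm (Suc k) (\<lambda>vs. F (Suc k) y vs - F (Suc k) x vs)) \<longlongrightarrow> 0) (at x)"
  using tower unfolding frechet_tower_def by blast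

lemma frechet_tower_first_linear:
  assumes "x \<in> S"
  shows "linear (\<lambda>h. F 1 x [h])" "\<exists>C. \<forall>w. norm (F 1 x [w]) \<le> C * norm w"
proof -
  have "bounded_multilinear_k 1 (F 1 x)" using tower assms unfolding frechet_tower_def by blast
  then show "linear (\<lambda>h. F 1 x [h])" "\<exists>C. \<forall>w. norm (F 1 x [w]) \<le> C * norm w"
    by (rule bounded_multilinear_k_1D)+
qed

lemma frechet_tower_second_bilinear:
  assumes "x \<in> S"
  shows "linear (\<lambda>h. F 2 x [h, b])" "linear (\<lambda>h. F 2 x [a, h])"
    "\<exists>C. \<forall>a b. norm (F 2 x [a, b]) \<le> C * norm a * norm b"
proof -
  have "bounded_multilinear_k 2 (F 2 x)" using tower assms unfolding frechet_tower_def by blast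
  then show "linear (\<lambda>h. F 2 x [h, b])" "linear (\<lambda>h. F 2 x [a, h])"
      "\<exists>C. \<forall>a b. norm (F 2 x [a, b]) \<le> C * norm a * norm b"
    by (rule bounded_multilinear_k_2D)+
qed

lemma frechet_tower_has_derivative:
  assumes x: "x \<in> S"
  shows "(f has_derivative (\<lambda>h. F 1 x [h])) (at x)"
  unfolding has_derivative_iff_norm
proof
  obtain C where "\<And>w. norm (F 1 x [w]) \<le> C * norm w" using frechet_tower_first_linear[OF x] by blast
  then show "bounded_linear (\<lambda>h. F 1 x [h])"
    by (rule bounded_linearI_linear[OF frechet_tower_first_linear(1)[OF x]])
  have "((\<lambda>y. mlnorm 0 (\<lambda>vs. F 0 y vs - F 0 x vs - F 1 x ((y - x) # vs)) / norm (y - x))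
      \<longlongrightarrow> 0) (at x)"
    using frechet_tower_remainder[OF x, of 0] by simp
  moreover have "\<forall>\<^sub>F y in at x. mlnorm 0 (\<lambda>vs. F 0 y vs - F 0 x vs - F 1 x ((y - x) # vs)) / norm (y - x)
      = norm (f y - f x - F 1 x [y - x]) / norm (y - x)"
    using eventually_at_in_open'[OF S x]
    by eventually_elim (simp add: mlnorm_0 frechet_tower_0 x)
  ultimately show "((\<lambda>y. norm (f y - f x - F 1 x [y - x]) / norm (y - x)) \<longlongrightarrow> 0) (at x)"
    by (rule Lim_transform_eventually)
qed

lemma frechet_tower_deriv_has_derivative:
  assumes x: "x \<in> S"
  shows "((\<lambda>y. F 1 y [w]) has_derivative (\<lambda>h. F 2 x [h, w])) (at x)"
  unfolding has_derivative_iff_norm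
proof
  obtain C2 where C2: "\<And>a b. norm (F 2 x [a, b]) \<le> C2 * norm a * norm b"
    using frechet_tower_second_bilinear[OF x] by blast
  show "bounded_linear (\<lambda>h. F 2 x [h, w])"
    by (rule bounded_linearI_linear[OF frechet_tower_second_bilinear(1)[OF x], where C="C2 * norm w"])
      (use C2 in \<open>simp add: ac_simps\<close>)
  define E where "E y = (\<lambda>vs. F 1 y vs - F 1 x vs - F 2 x ((y - x) # vs))" for y
  have lim: "((\<lambda>y. mlnorm 1 (E y) / norm (y - x) * norm w) \<longlongrightarrow> 0) (at x)"
    using frechet_tower_remainder[OF x, of 1] unfolding E_def
    by (intro tendsto_mult_left_zero) (simp add: numeral_2_eq_2)
  have "\<forall>\<^sub>F y in at x. norm (norm (F 1 y [w] - F 1 x [w] - F 2 x [y - x, w]) / norm (y - x))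
      \<le> mlnorm 1 (E y) / norm (y - x) * norm w"
    using eventually_at_in_open'[OF S x]
  proof eventually_elim
    case (elim y)
    obtain Cy where Cy: "\<And>w. norm (F 1 y [w]) \<le> Cy * norm w"
      using frechet_tower_first_linear[OF elim] by blast
    obtain Cx where Cx: "\<And>w. norm (F 1 x [w]) \<le> Cx * norm w"
      using frechet_tower_first_linear[OF x] by blast
    have "linear (\<lambda>h. E y [h])"
      unfolding E_def using frechet_tower_first_linear frechet_tower_second_bilinear x elim
      by (intro linear_compose_sub) auto
    moreover have "norm (E y [v]) \<le> (Cy + Cx + C2 * norm (y - x)) * norm v" for v
    proof -
      have "norm (E y [v]) \<le> norm (F 1 y [v]) + norm (F 1 x [v]) + norm (F 2 x [y - x, v])"
        unfolding E_def
        using norm_triangle_ineq4[of "F 1 y [v] - F 1 x [v]" "F 2 x [y - x, v]"]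
          norm_triangle_ineq4[of "F 1 y [v]" "F 1 x [v]"] by simp
      also have "\<dots> \<le> Cy * norm v + Cx * norm v + C2 * norm (y - x) * norm v"
        using Cy Cx C2 by (intro add_mono)
      finally show ?thesis by (simp add: algebra_simps)
    qed
    ultimately have "norm (E y [w]) \<le> mlnorm 1 (E y) * norm w" by (rule norm_le_mlnorm_1)
    then show ?case unfolding E_def by (simp add: divide_right_mono)
  qed
  from Lim_null_comparison[OF this lim]
  show "((\<lambda>y. norm (F 1 y [w] - F 1 x [w] - F 2 x [y - x, w]) / norm (y - x)) \<longlongrightarrow> 0) (at x)" .
qed

lemma frechet_tower_second_isCont:
  assumes x: "x \<in> S"
  shows "isCont (\<lambda>y. mlnorm 2 (\<lambda>vs. F 2 y vs - F 2 x vs)) x"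
  using frechet_tower_continuous[OF x, of 1] unfolding isCont_def by (simp add: mlnorm_zero numeral_2_eq_2)

lemma frechet_tower_second_diff_le:
  assumes x: "x \<in> S" and y: "y \<in> S"
  shows "norm (F 2 y [a, b] - F 2 x [a, b]) \<le> mlnorm 2 (\<lambda>vs. F 2 y vs - F 2 x vs) * norm a * norm b"
proof -
  obtain Cy where Cy: "\<And>a b. norm (F 2 y [a, b]) \<le> Cy * norm a * norm b"
    using frechet_tower_second_bilinear[OF y] by blast
  obtain Cx where Cx: "\<And>a b. norm (F 2 x [a, b]) \<le> Cx * norm a * norm b"
    using frechet_tower_second_bilinear[OF x] by blast
  show ?thesis
  proof (rule norm_le_mlnorm_2[where C="Cy + Cx"])
    show "norm (F 2 y [a, b] - F 2 x [a, b]) \<le> (Cy + Cx) * norm a * norm b" for a b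
      using norm_triangle_ineq4[of "F 2 y [a, b]" "F 2 x [a, b]"] Cy[of a b] Cx[of a b]
      by (simp add: distrib_right)
    show "linear (\<lambda>h. F 2 y [h, b] - F 2 x [h, b])" "linear (\<lambda>h. F 2 y [a, h] - F 2 x [a, h])" for a b
      using frechet_tower_second_bilinear[OF x] frechet_tower_second_bilinear[OF y]
      by (auto intro: linear_compose_sub)
  qed
qed

end

section \<open>Second mixed differences of functions of two real variables\<close>

lemma norm_diff_le_vector_derivative_bound:
  fixes f :: "real \<Rightarrow> 'b::real_normed_vector"
  assumes deriv: "\<And>x. \<bar>x\<bar> < r \<Longrightarrow> (f has_vector_derivative f' x) (at x)"
    and bound: "\<And>x. \<bar>x\<bar> < r \<Longrightarrow> norm (f' x) \<le> B"
    and "\<bar>a\<bar> < r" "\<bar>b\<bar> < r"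
  shows "norm (f b - f a) \<le> B * \<bar>b - a\<bar>"
proof -
  have "norm (f b - f a) \<le> B * norm (b - a)"
  proof (rule differentiable_bound[where S="{-r<..<r}" and f'="\<lambda>x h. h *\<^sub>R f' x"])
    show "(f has_derivative (\<lambda>h. h *\<^sub>R f' x)) (at x within {-r<..<r})" if "x \<in> {-r<..<r}" for x
      using deriv[of x] that unfolding has_vector_derivative_def by (auto intro: has_derivative_at_withinI)
    show "onorm (\<lambda>h. h *\<^sub>R f' x) \<le> B" if "x \<in> {-r<..<r}" for x
      using bound[of x] that onorm_scaleR_left[OF bounded_linear_ident, of "f' x"] by (simp add: onorm_id abs_less_iff)
  qed (use assms in auto)
  then show ?thesis by simp
qed

definition mixed_difference_expansion :: "(real \<Rightarrow> real \<Rightarrow> 'a::real_normed_vector) \<Rightarrow> 'a \<Rightarrow> bool" where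
  "mixed_difference_expansion k L \<longleftrightarrow>
     (\<forall>e>0. \<exists>d>0. \<forall>s t. \<bar>s\<bar> < d \<and> \<bar>t\<bar> < d \<longrightarrow>
        norm (k s t - k s 0 - k 0 t + k 0 0 - (s * t) *\<^sub>R L) \<le> e * \<bar>s\<bar> * \<bar>t\<bar>)"

lemma mixed_difference_expansionI:
  fixes k :: "real \<Rightarrow> real \<Rightarrow> 'b::real_normed_vector"
  assumes "\<delta> > 0"
    and deriv1: "\<And>\<sigma> \<tau>. \<bar>\<sigma>\<bar> < \<delta> \<Longrightarrow> \<bar>\<tau>\<bar> < \<delta> \<Longrightarrow> ((\<lambda>\<sigma>. k \<sigma> \<tau>) has_vector_derivative G \<sigma> \<tau>) (at \<sigma>)"
    and deriv2: "\<And>\<sigma> \<tau>. \<bar>\<sigma>\<bar> < \<delta> \<Longrightarrow> \<bar>\<tau>\<bar> < \<delta> \<Longrightarrow> ((\<lambda>\<tau>. G \<sigma> \<tau>) has_vector_derivative M \<sigma> \<tau>) (at \<tau>)"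
    and cont: "isCont (\<lambda>z. M (fst z) (snd z)) (0, 0)"
  shows "mixed_difference_expansion k (M 0 0)"
  unfolding mixed_difference_expansion_def
proof (intro allI impI)
  fix e :: real assume "e > 0"
  then obtain d0 where "d0 > 0" and d0: "\<And>z. dist z (0, 0) < d0 \<Longrightarrow> norm (M (fst z) (snd z) - M 0 0) < e"
    using cont unfolding continuous_at_eps_delta by (auto simp: dist_norm)
  define d where "d = min \<delta> (d0 / 2)"
  have "d > 0" using \<open>\<delta> > 0\<close> \<open>d0 > 0\<close> by (simp add: d_def)
  have linear_deriv: "((\<lambda>\<tau>. \<tau> *\<^sub>R c) has_vector_derivative c) (at x)" for c :: 'b and x
    unfolding has_vector_derivative_def
    by (rule bounded_linear_imp_has_derivative[OF bounded_linear_scaleR_left])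
  have M_close: "norm (M \<sigma> \<tau> - M 0 0) \<le> e" if "\<bar>\<sigma>\<bar> < d" "\<bar>\<tau>\<bar> < d" for \<sigma> \<tau>
  proof -
    have "dist (\<sigma>, \<tau>) (0, 0) \<le> \<bar>\<sigma>\<bar> + \<bar>\<tau>\<bar>"
      unfolding dist_Pair_Pair using sqrt_sum_squares_le_sum_abs[of \<sigma> \<tau>] by (simp add: dist_real_def)
    then show ?thesis using d0[of "(\<sigma>, \<tau>)"] that by (simp add: d_def)
  qed
  have inner: "norm (G \<sigma> t - G \<sigma> 0 - t *\<^sub>R M 0 0) \<le> e * \<bar>t\<bar>" if "\<bar>\<sigma>\<bar> < d" "\<bar>t\<bar> < d" for \<sigma> t
  proof -
    have "norm ((G \<sigma> t - t *\<^sub>R M 0 0) - (G \<sigma> 0 - 0 *\<^sub>R M 0 0)) \<le> e * \<bar>t - 0\<bar>"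
    proof (rule norm_diff_le_vector_derivative_bound[where r=d])
      show "((\<lambda>\<tau>. G \<sigma> \<tau> - \<tau> *\<^sub>R M 0 0) has_vector_derivative M \<sigma> \<tau> - M 0 0) (at \<tau>)"
        if "\<bar>\<tau>\<bar> < d" for \<tau>
      proof -
        have "\<bar>\<sigma>\<bar> < \<delta>" "\<bar>\<tau>\<bar> < \<delta>" using \<open>\<bar>\<sigma>\<bar> < d\<close> that by (auto simp: d_def)
        from has_vector_derivative_diff[OF deriv2[OF this] linear_deriv] show ?thesis .
      qed
    qed (use M_close that \<open>d > 0\<close> in auto)
    then show ?thesis by (simp add: algebra_simps)
  qed
  show "\<exists>d>0. \<forall>s t. \<bar>s\<bar> < d \<and> \<bar>t\<bar> < d \<longrightarrow>
      norm (k s t - k s 0 - k 0 t + k 0 0 - (s * t) *\<^sub>R M 0 0) \<le> e * \<bar>s\<bar> * \<bar>t\<bar>"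
  proof (intro exI[of _ d] conjI allI impI \<open>d > 0\<close>)
    fix s t :: real assume st: "\<bar>s\<bar> < d \<and> \<bar>t\<bar> < d"
    have "norm ((k s t - k s 0 - (s * t) *\<^sub>R M 0 0) - (k 0 t - k 0 0 - (0 * t) *\<^sub>R M 0 0))
        \<le> (e * \<bar>t\<bar>) * \<bar>s - 0\<bar>"
    proof (rule norm_diff_le_vector_derivative_bound[where r=d])
      show "((\<lambda>\<sigma>. k \<sigma> t - k \<sigma> 0 - (\<sigma> * t) *\<^sub>R M 0 0) has_vector_derivative
          G \<sigma> t - G \<sigma> 0 - t *\<^sub>R M 0 0) (at \<sigma>)" if "\<bar>\<sigma>\<bar> < d" for \<sigma>
      proof -
        have "\<bar>\<sigma>\<bar> < \<delta>" "\<bar>t\<bar> < \<delta>" "\<bar>0::real\<bar> < \<delta>" using that st \<open>\<delta> > 0\<close> by (auto simp: d_def)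
        from has_vector_derivative_diff[OF has_vector_derivative_diff[OF deriv1[OF this(1,2)] deriv1[OF this(1,3)]]
            linear_deriv[of "t *\<^sub>R M 0 0"]]
        show ?thesis by (simp add: mult.commute)
      qed
    qed (use inner st \<open>d > 0\<close> in auto)
    then show "norm (k s t - k s 0 - k 0 t + k 0 0 - (s * t) *\<^sub>R M 0 0) \<le> e * \<bar>s\<bar> * \<bar>t\<bar>"
      by (simp add: algebra_simps)
  qed
qed

lemma tendsto_bilinear_family:
  fixes S :: "'z \<Rightarrow> 'x::real_normed_vector list \<Rightarrow> 'y::real_normed_vector"
  assumes A: "(A \<longlongrightarrow> a0) F" and B: "(B \<longlongrightarrow> b0) F"
    and close: "\<forall>\<^sub>F z in F. \<forall>a b. norm (S z [a, b] - T [a, b]) \<le> \<rho> z * norm a * norm b"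
    and \<rho>: "(\<rho> \<longlongrightarrow> 0) F"
    and lin1: "\<And>b. linear (\<lambda>h. T [h, b])" and lin2: "\<And>a. linear (\<lambda>h. T [a, h])"
    and bound: "\<And>a b. norm (T [a, b]) \<le> C * norm a * norm b"
  shows "((\<lambda>z. S z [A z, B z]) \<longlongrightarrow> T [a0, b0]) F"
proof (rule LIM_zero_cancel, rule Lim_null_comparison)
  let ?g = "\<lambda>z. \<rho> z * norm (A z) * norm (B z) + C * norm (A z - a0) * norm (B z)
    + C * norm a0 * norm (B z - b0)"
  show "(?g \<longlongrightarrow> 0) F"
    by (auto intro!: tendsto_eq_intros A B \<rho>)
  show "\<forall>\<^sub>F z in F. norm (S z [A z, B z] - T [a0, b0]) \<le> ?g z"
    using close
  proof eventually_elim
    case (elim z)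
    have "S z [A z, B z] - T [a0, b0]
        = (S z [A z, B z] - T [A z, B z]) + T [A z - a0, B z] + T [a0, B z - b0]"
      using linear_diff[OF lin1[of "B z"]] linear_diff[OF lin2[of a0]] by simp
    also have "norm \<dots> \<le> ?g z"
      using elim bound[of "A z - a0" "B z"] bound[of a0 "B z - b0"]
      by (smt (verit) norm_triangle_ineq)
    finally show ?case .
  qed
qed

section \<open>Reproducing kernel Hilbert spaces\<close>

locale rkhs_space =
  fixes K :: "'m \<Rightarrow> 'm \<Rightarrow> complex" and H :: "('m \<Rightarrow> complex) set"
    and ip :: "('m \<Rightarrow> complex) \<Rightarrow> ('m \<Rightarrow> complex) \<Rightarrow> complex"
  assumes rkhs: "rkhs K H ip"
begin

lemma zero_mem: "(\<lambda>x. 0) \<in> H"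
  using rkhs unfolding rkhs_def by blast

lemma add_mem: "f \<in> H \<Longrightarrow> g \<in> H \<Longrightarrow> (\<lambda>x. f x + g x) \<in> H"
  using rkhs unfolding rkhs_def by blast

lemma scale_mem: "f \<in> H \<Longrightarrow> (\<lambda>x. c * f x) \<in> H"
  using rkhs unfolding rkhs_def by blast

lemma diff_mem: "f \<in> H \<Longrightarrow> g \<in> H \<Longrightarrow> (\<lambda>x. f x - g x) \<in> H"
  using add_mem[of f "\<lambda>x. (-1) * g x"] scale_mem[of g "-1"] by simp

lemma divide_mem: "f \<in> H \<Longrightarrow> (\<lambda>x. f x / c) \<in> H"
  using scale_mem[of f "inverse c"] by (simp add: divide_inverse mult.commute)

lemma sum_mem: "(\<And>j. u j \<in> H) \<Longrightarrow> (\<lambda>x. \<Sum>j<(n::nat). c j * u j x) \<in> H"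
  by (induction n) (simp_all add: zero_mem add_mem scale_mem)

lemma kernel_mem: "(\<lambda>x. K x m) \<in> H"
  using rkhs unfolding rkhs_def by blast

lemma reproducing: "f \<in> H \<Longrightarrow> ip f (\<lambda>x. K x m) = f m"
  using rkhs unfolding rkhs_def by metis

lemma complete:
  "(\<And>n. X n \<in> H) \<Longrightarrow> (\<And>e. e > 0 \<Longrightarrow> \<exists>N. \<forall>m\<ge>N. \<forall>n\<ge>N. hnorm ip (\<lambda>x. X m x - X n x) < e)
    \<Longrightarrow> \<exists>f\<in>H. (\<lambda>n. hnorm ip (\<lambda>x. X n x - f x)) \<longlonglongrightarrow> 0"
  using rkhs unfolding rkhs_def by blast

lemma inner_add_left: "f \<in> H \<Longrightarrow> g \<in> H \<Longrightarrow> h \<in> H \<Longrightarrow> ip (\<lambda>x. f x + g x) h = ip f h + ip g h"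
  using rkhs unfolding rkhs_def by blast

lemma inner_scale_left: "f \<in> H \<Longrightarrow> g \<in> H \<Longrightarrow> ip (\<lambda>x. c * f x) g = c * ip f g"
  using rkhs unfolding rkhs_def by blast

lemma inner_commute: "f \<in> H \<Longrightarrow> g \<in> H \<Longrightarrow> ip g f = cnj (ip f g)"
  using rkhs unfolding rkhs_def by blast

lemma inner_self_nonneg: "f \<in> H \<Longrightarrow> Re (ip f f) \<ge> 0"
  using rkhs unfolding rkhs_def by blast

lemma inner_self_eq_zero: "f \<in> H \<Longrightarrow> ip f f = 0 \<Longrightarrow> f = (\<lambda>x. 0)"
  using rkhs unfolding rkhs_def by blast

lemma inner_add_right: "f \<in> H \<Longrightarrow> g \<in> H \<Longrightarrow> h \<in> H \<Longrightarrow> ip h (\<lambda>x. f x + g x) = ip h f + ip h g"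
  by (simp add: inner_commute[of _ h] add_mem inner_add_left)

lemma inner_scale_right: "f \<in> H \<Longrightarrow> g \<in> H \<Longrightarrow> ip g (\<lambda>x. c * f x) = cnj c * ip g f"
  by (simp add: inner_commute[of _ g] scale_mem inner_scale_left)

lemma inner_diff_left: "f \<in> H \<Longrightarrow> g \<in> H \<Longrightarrow> h \<in> H \<Longrightarrow> ip (\<lambda>x. f x - g x) h = ip f h - ip g h"
  using inner_add_left[of f "\<lambda>x. (-1) * g x" h] inner_scale_left[of g h "-1"] scale_mem[of g "-1"]
  by simp

lemma inner_diff_right: "f \<in> H \<Longrightarrow> g \<in> H \<Longrightarrow> h \<in> H \<Longrightarrow> ip h (\<lambda>x. f x - g x) = ip h f - ip h g"
  by (simp add: inner_commute[of _ h] diff_mem inner_diff_left)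

lemma inner_divide_left: "f \<in> H \<Longrightarrow> g \<in> H \<Longrightarrow> ip (\<lambda>x. f x / c) g = ip f g / c"
  using inner_scale_left[of f g "inverse c"] by (simp add: divide_inverse mult.commute)

lemma inner_divide_right_real:
  "f \<in> H \<Longrightarrow> g \<in> H \<Longrightarrow> ip g (\<lambda>x. f x / complex_of_real c) = ip g f / complex_of_real c"
  using inner_scale_right[of f g "inverse (complex_of_real c)"] by (simp add: divide_inverse mult.commute)

lemma inner_zero_right: "f \<in> H \<Longrightarrow> ip f (\<lambda>x. 0) = 0"
  using inner_scale_right[of f f 0] by simp

lemma inner_sum_right:
  "(\<And>j. u j \<in> H) \<Longrightarrow> h \<in> H \<Longrightarrow> ip h (\<lambda>x. \<Sum>j<(n::nat). c j * u j x) = (\<Sum>j<n. cnj (c j) * ip h (u j))"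
  by (induction n) (simp_all add: inner_zero_right inner_add_right sum_mem scale_mem inner_scale_right)

lemma inner_self_real: "f \<in> H \<Longrightarrow> ip f f = complex_of_real (Re (ip f f))"
  using inner_commute[of f f] by (simp add: complex_eq_iff)

lemma hnorm_nonneg: "f \<in> H \<Longrightarrow> hnorm ip f \<ge> 0"
  unfolding hnorm_def using inner_self_nonneg by simp

lemma hnorm_square: "f \<in> H \<Longrightarrow> (hnorm ip f)\<^sup>2 = Re (ip f f)"
  unfolding hnorm_def using inner_self_nonneg by simp

lemma Cauchy_Schwarz:
  assumes f: "f \<in> H" and g: "g \<in> H"
  shows "cmod (ip f g) \<le> hnorm ip f * hnorm ip g"
proof (cases "ip g g = 0")
  case True
  then have "g = (\<lambda>x. 0)" using inner_self_eq_zero g by blast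
  then show ?thesis using inner_zero_right f hnorm_nonneg[OF f] hnorm_nonneg[OF g] by simp
next
  case False
  define b where "b = Re (ip g g)"
  have gg: "ip g g = complex_of_real b" using inner_self_real g b_def by blast
  have "b \<noteq> 0" using False gg by auto
  then have "b > 0" using inner_self_nonneg[OF g] b_def by simp
  define a where "a = ip f g"
  define l where "l = a / ip g g"
  have lg: "(\<lambda>x. l * g x) \<in> H" using scale_mem g by blast
  \<comment> \<open>expand \<open>0 \<le> \<langle>f - l g, f - l g\<rangle>\<close> with the optimal \<open>l\<close>\<close>
  have "0 \<le> Re (ip (\<lambda>x. f x - l * g x) (\<lambda>x. f x - l * g x))"
    using inner_self_nonneg diff_mem f lg by blast
  also have "ip (\<lambda>x. f x - l * g x) (\<lambda>x. f x - l * g x)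
      = ip f f - cnj l * ip f g - l * ip g f + l * cnj l * ip g g"
    using f g lg
    by (simp add: inner_diff_left inner_diff_right diff_mem inner_scale_left inner_scale_right algebra_simps)
  also have "\<dots> = ip f f - a * cnj a / complex_of_real b"
    unfolding l_def gg using \<open>b > 0\<close> inner_commute[OF f g] a_def by (simp add: field_simps)
  also have "a * cnj a = complex_of_real ((cmod a)\<^sup>2)"
    using complex_norm_square[of a] by simp
  finally have "(cmod a)\<^sup>2 / b \<le> Re (ip f f)" by simp
  then have "(cmod a)\<^sup>2 \<le> Re (ip f f) * b" using \<open>b > 0\<close> by (simp add: field_simps)
  also have "\<dots> = (hnorm ip f * hnorm ip g)\<^sup>2"
    using hnorm_square f g b_def by (simp add: power_mult_distrib)
  finally have "(cmod (ip f g))\<^sup>2 \<le> (hnorm ip f * hnorm ip g)\<^sup>2" unfolding a_def .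
  then show ?thesis
    by (rule power2_le_imp_le) (use hnorm_nonneg[OF f] hnorm_nonneg[OF g] in simp)
qed

lemma hnorm_triangle:
  assumes f: "f \<in> H" and g: "g \<in> H"
  shows "hnorm ip (\<lambda>x. f x + g x) \<le> hnorm ip f + hnorm ip g"
proof -
  have "(hnorm ip (\<lambda>x. f x + g x))\<^sup>2 = Re (ip f f) + 2 * Re (ip f g) + Re (ip g g)"
    using f g inner_commute[OF f g] by (simp add: hnorm_square add_mem inner_add_left inner_add_right)
  also have "\<dots> \<le> Re (ip f f) + 2 * (hnorm ip f * hnorm ip g) + Re (ip g g)"
    using Cauchy_Schwarz[OF f g] complex_Re_le_cmod[of "ip f g"] by linarith
  also have "\<dots> = (hnorm ip f + hnorm ip g)\<^sup>2"
    using f g by (simp add: power2_sum flip: hnorm_square)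
  finally show ?thesis
    by (rule power2_le_imp_le) (use hnorm_nonneg[OF f] hnorm_nonneg[OF g] in simp)
qed

lemma hnorm_diff_triangle:
  "a \<in> H \<Longrightarrow> b \<in> H \<Longrightarrow> c \<in> H
    \<Longrightarrow> hnorm ip (\<lambda>x. a x - c x) \<le> hnorm ip (\<lambda>x. a x - b x) + hnorm ip (\<lambda>x. b x - c x)"
  using hnorm_triangle[of "\<lambda>x. a x - b x" "\<lambda>x. b x - c x"] diff_mem by simp

end

lemma has_vector_derivative_at_0_of_quotient:
  fixes F :: "real \<Rightarrow> complex"
  assumes "((\<lambda>t. (F t - F 0) / complex_of_real t) \<longlongrightarrow> c) (at 0)"
  shows "(F has_vector_derivative c) (at 0)"
  unfolding has_vector_derivative_def has_derivative_iff_norm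
proof
  show "bounded_linear (\<lambda>h. h *\<^sub>R c)" by (rule bounded_linear_scaleR_left)
  have "((\<lambda>t. cmod ((F t - F 0) / complex_of_real t - c)) \<longlongrightarrow> 0) (at 0)"
    using assms by (simp add: tendsto_norm_zero_iff LIM_zero_iff)
  moreover have "\<forall>\<^sub>F t in at 0. cmod ((F t - F 0) / complex_of_real t - c)
      = norm (F t - F 0 - (t - 0) *\<^sub>R c) / norm (t - 0)"
  proof (rule eventually_mono[OF eventually_at_filter[THEN iffD2]])
    fix t :: real assume "t \<noteq> 0"
    then have "(F t - F 0) / complex_of_real t - c = (F t - F 0 - complex_of_real t * c) / complex_of_real t"
      by (simp add: field_simps)
    then show "cmod ((F t - F 0) / complex_of_real t - c) = norm (F t - F 0 - (t - 0) *\<^sub>R c) / norm (t - 0)"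
      by (simp add: norm_divide scaleR_conv_of_real)
  qed simp
  ultimately show "((\<lambda>t. norm (F t - F 0 - (t - 0) *\<^sub>R c) / norm (t - 0)) \<longlongrightarrow> 0) (at 0)"
    by (rule Lim_transform_eventually)
qed

lemma norm_diff_diff_add_le:
  fixes a :: "'a::real_normed_vector"
  shows "norm (a - b - c + d) \<le> norm a + norm b + norm c + norm d"
  using norm_triangle_ineq[of "a - b - c" d] norm_triangle_ineq4[of "a - b" c] norm_triangle_ineq4[of a b]
  by linarith

context rkhs_space
begin

lemma limit_at_0_of_Cauchy:
  fixes q :: "real \<Rightarrow> 'm \<Rightarrow> complex"
  assumes q: "\<And>t. q t \<in> H"
    and Cauchy: "\<And>e. e > 0 \<Longrightarrow> \<exists>d>0. \<forall>s t. s \<noteq> 0 \<and> t \<noteq> 0 \<and> \<bar>s\<bar> < d \<and> \<bar>t\<bar> < d \<longrightarrow>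
        hnorm ip (\<lambda>x. q s x - q t x) < e"
  shows "\<exists>D\<in>H. ((\<lambda>t. hnorm ip (\<lambda>x. q t x - D x)) \<longlongrightarrow> 0) (at 0)"
proof -
  define X where "X n = q (inverse (real (Suc n)))" for n
  have eventually_small: "\<forall>\<^sub>F n in sequentially. \<bar>inverse (real (Suc n))\<bar> < d" if "d > 0" for d
    using LIMSEQ_inverse_real_of_nat that unfolding tendsto_iff by (simp add: dist_real_def)
  have "\<exists>N. \<forall>m\<ge>N. \<forall>n\<ge>N. hnorm ip (\<lambda>x. X m x - X n x) < e" if "e > 0" for e
  proof -
    obtain d where "d > 0" and d: "\<And>s t. s \<noteq> 0 \<Longrightarrow> t \<noteq> 0 \<Longrightarrow> \<bar>s\<bar> < d \<Longrightarrow> \<bar>t\<bar> < d \<Longrightarrow>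
        hnorm ip (\<lambda>x. q s x - q t x) < e"
      using Cauchy[OF \<open>e > 0\<close>] by blast
    obtain N where "\<And>n. n \<ge> N \<Longrightarrow> \<bar>inverse (real (Suc n))\<bar> < d"
      using eventually_small[OF \<open>d > 0\<close>] unfolding eventually_sequentially by blast
    then show ?thesis unfolding X_def by (intro exI[of _ N]) (simp add: d)
  qed
  then obtain D where "D \<in> H" and D: "(\<lambda>n. hnorm ip (\<lambda>x. X n x - D x)) \<longlonglongrightarrow> 0"
    using complete[of X] q unfolding X_def by blast
  have "\<exists>d>0. \<forall>t. t \<noteq> 0 \<and> dist t 0 < d \<longrightarrow> hnorm ip (\<lambda>x. q t x - D x) < e" if "e > 0" for e
  proof -
    obtain d where "d > 0" and d: "\<And>s t. s \<noteq> 0 \<Longrightarrow> t \<noteq> 0 \<Longrightarrow> \<bar>s\<bar> < d \<Longrightarrow> \<bar>t\<bar> < d \<Longrightarrow>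
        hnorm ip (\<lambda>x. q s x - q t x) < e / 2"
      using Cauchy[of "e / 2"] \<open>e > 0\<close> by auto
    have "\<forall>\<^sub>F n in sequentially. hnorm ip (\<lambda>x. X n x - D x) < e / 2"
      using D \<open>e > 0\<close> unfolding tendsto_iff dist_real_def
      by (auto elim!: allE[of _ "e / 2"] eventually_mono)
    with eventually_small[OF \<open>d > 0\<close>]
    have ev: "\<forall>\<^sub>F n in sequentially. \<bar>inverse (real (Suc n))\<bar> < d \<and> hnorm ip (\<lambda>x. X n x - D x) < e / 2"
      by (rule eventually_conj)
    obtain n where n: "\<bar>inverse (real (Suc n))\<bar> < d" "hnorm ip (\<lambda>x. X n x - D x) < e / 2"
      using eventually_happens[OF ev] by auto
    show ?thesis
    proof (intro exI[of _ d] conjI allI impI \<open>d > 0\<close>)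
      fix t :: real assume t: "t \<noteq> 0 \<and> dist t 0 < d"
      have "hnorm ip (\<lambda>x. q t x - D x) \<le> hnorm ip (\<lambda>x. q t x - X n x) + hnorm ip (\<lambda>x. X n x - D x)"
        using hnorm_diff_triangle q \<open>D \<in> H\<close> unfolding X_def by blast
      also have "\<dots> < e / 2 + e / 2"
        using d[of t "inverse (real (Suc n))"] t n unfolding X_def by (intro add_strict_mono) auto
      finally show "hnorm ip (\<lambda>x. q t x - D x) < e" by simp
    qed
  qed
  then have "((\<lambda>t. hnorm ip (\<lambda>x. q t x - D x)) \<longlongrightarrow> 0) (at 0)"
    unfolding tendsto_iff eventually_at
    using hnorm_nonneg q \<open>D \<in> H\<close> diff_mem by (simp add: dist_real_def)
  with \<open>D \<in> H\<close> show ?thesis by blast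
qed

lemma mixed_expansion_imp_has_derivative:
  fixes g :: "real \<Rightarrow> 'm \<Rightarrow> complex"
  assumes g: "\<And>t. g t \<in> H" and expansion: "mixed_difference_expansion (\<lambda>s t. ip (g s) (g t)) L"
  shows "\<exists>D\<in>H. H_has_derivative_at0 ip g D"
proof -
  define \<Delta> where "\<Delta> t = (\<lambda>x. g t x - g 0 x)" for t
  define q where "q t = (\<lambda>x. \<Delta> t x / complex_of_real t)" for t
  have \<Delta>: "\<Delta> t \<in> H" for t unfolding \<Delta>_def by (intro diff_mem g)
  have q: "q t \<in> H" for t unfolding q_def by (intro divide_mem \<Delta>)
  have inner_\<Delta>: "ip (\<Delta> s) (\<Delta> t) = ip (g s) (g t) - ip (g s) (g 0) - ip (g 0) (g t) + ip (g 0) (g 0)" for s t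
    unfolding \<Delta>_def using g by (simp add: inner_diff_left inner_diff_right diff_mem)
  have inner_q: "ip (q s) (q t) = ip (\<Delta> s) (\<Delta> t) / complex_of_real (s * t)" for s t
    unfolding q_def using \<Delta> by (simp add: inner_divide_left inner_divide_right_real divide_mem)
  have Cauchy: "\<exists>d>0. \<forall>s t. s \<noteq> 0 \<and> t \<noteq> 0 \<and> \<bar>s\<bar> < d \<and> \<bar>t\<bar> < d \<longrightarrow> hnorm ip (\<lambda>x. q s x - q t x) < e"
    if "e > 0" for e
  proof -
    define e' where "e' = e\<^sup>2 / 8"
    have "e' > 0" using \<open>e > 0\<close> by (simp add: e'_def)
    then obtain d where "d > 0" and d: "\<And>s t. \<bar>s\<bar> < d \<Longrightarrow> \<bar>t\<bar> < d \<Longrightarrow>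
        norm (ip (g s) (g t) - ip (g s) (g 0) - ip (g 0) (g t) + ip (g 0) (g 0) - (s * t) *\<^sub>R L)
          \<le> e' * \<bar>s\<bar> * \<bar>t\<bar>"
      using expansion unfolding mixed_difference_expansion_def by blast
    have close: "cmod (ip (q s) (q t) - L) \<le> e'" if "s \<noteq> 0" "t \<noteq> 0" "\<bar>s\<bar> < d" "\<bar>t\<bar> < d" for s t
    proof -
      have "ip (q s) (q t) - L = (ip (\<Delta> s) (\<Delta> t) - complex_of_real (s * t) * L) / complex_of_real (s * t)"
        using that by (simp add: inner_q field_simps)
      then have "cmod (ip (q s) (q t) - L)
          = cmod (ip (\<Delta> s) (\<Delta> t) - complex_of_real (s * t) * L) / (\<bar>s\<bar> * \<bar>t\<bar>)"
        by (simp add: norm_divide abs_mult del: of_real_mult)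
      also have "\<dots> \<le> e'"
        using d[OF that(3,4)] that by (simp add: inner_\<Delta> scaleR_conv_of_real divide_le_eq mult.assoc)
      finally show ?thesis .
    qed
    have "(hnorm ip (\<lambda>x. q s x - q t x))\<^sup>2 < e\<^sup>2"
      if "s \<noteq> 0" "t \<noteq> 0" "\<bar>s\<bar> < d" "\<bar>t\<bar> < d" for s t
    proof -
      \<comment> \<open>all four inner products of \<open>q s\<close> and \<open>q t\<close> are close to \<open>L\<close>, which cancels out\<close>
      have "(hnorm ip (\<lambda>x. q s x - q t x))\<^sup>2
          = Re ((ip (q s) (q s) - L) - (ip (q s) (q t) - L) - (ip (q t) (q s) - L) + (ip (q t) (q t) - L))"
        using q by (simp add: hnorm_square diff_mem inner_diff_left inner_diff_right)
      also have "\<dots> \<le> cmod (ip (q s) (q s) - L) + cmod (ip (q s) (q t) - L) + cmod (ip (q t) (q s) - L)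
          + cmod (ip (q t) (q t) - L)"
        by (rule order_trans[OF complex_Re_le_cmod norm_diff_diff_add_le])
      also have "\<dots> \<le> 4 * e'"
        using close[OF that(1,1,3,3)] close[OF that] close[OF that(2,1,4,3)] close[OF that(2,2,4,4)]
        by linarith
      also have "\<dots> < e\<^sup>2" using \<open>e > 0\<close> by (simp add: e'_def)
      finally show ?thesis .
    qed
    then show ?thesis
      using \<open>d > 0\<close> \<open>e > 0\<close> by (meson power_less_imp_less_base less_imp_le)
  qed
  obtain D where "D \<in> H" "((\<lambda>t. hnorm ip (\<lambda>x. q t x - D x)) \<longlongrightarrow> 0) (at 0)"
    using limit_at_0_of_Cauchy[OF q Cauchy] by blast
  then show ?thesis unfolding H_has_derivative_at0_def q_def \<Delta>_def by blast
qed

lemma H_has_derivative_at0_inner: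
  assumes \<gamma>: "\<And>t. \<gamma> t \<in> H" and "D \<in> H" and deriv: "H_has_derivative_at0 ip \<gamma> D" and f: "f \<in> H"
  shows "((\<lambda>t. ip f (\<gamma> t)) has_vector_derivative ip f D) (at 0)"
proof (rule has_vector_derivative_at_0_of_quotient)
  define q where "q t = (\<lambda>x. (\<gamma> t x - \<gamma> 0 x) / complex_of_real t)" for t
  have q: "q t \<in> H" for t unfolding q_def by (intro divide_mem diff_mem \<gamma>)
  have quotient: "(ip f (\<gamma> t) - ip f (\<gamma> 0)) / complex_of_real t = ip f (q t)" for t
    unfolding q_def using \<gamma> f by (simp add: inner_divide_right_real inner_diff_right diff_mem)
  have lim: "((\<lambda>t. hnorm ip f * hnorm ip (\<lambda>x. q t x - D x)) \<longlongrightarrow> 0) (at 0)"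
    using deriv unfolding H_has_derivative_at0_def q_def by (intro tendsto_mult_right_zero)
  have bound: "norm (ip f (q t) - ip f D) \<le> hnorm ip f * hnorm ip (\<lambda>x. q t x - D x)" for t
    using Cauchy_Schwarz[OF f diff_mem[OF q \<open>D \<in> H\<close>]] inner_diff_right[OF q \<open>D \<in> H\<close> f] by simp
  from Lim_null_comparison[OF always_eventually[OF allI[OF bound]] lim]
  show "((\<lambda>t. (ip f (\<gamma> t) - ip f (\<gamma> 0)) / complex_of_real t) \<longlongrightarrow> ip f D) (at 0)"
    unfolding quotient by (simp add: LIM_zero_iff)
qed

end

section \<open>Kernel functions along the flow\<close>

lemma mixed_difference_expansion_cong:
  assumes "\<delta> > 0" and eq: "\<And>s t. \<bar>s\<bar> < \<delta> \<Longrightarrow> \<bar>t\<bar> < \<delta> \<Longrightarrow> k s t = k' s t"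
    and "mixed_difference_expansion k L"
  shows "mixed_difference_expansion k' L"
  unfolding mixed_difference_expansion_def
proof (intro allI impI)
  fix e :: real assume "e > 0"
  then obtain d where "d > 0" and d: "\<And>s t. \<bar>s\<bar> < d \<Longrightarrow> \<bar>t\<bar> < d \<Longrightarrow>
      norm (k s t - k s 0 - k 0 t + k 0 0 - (s * t) *\<^sub>R L) \<le> e * \<bar>s\<bar> * \<bar>t\<bar>"
    using assms(3) unfolding mixed_difference_expansion_def by blast
  show "\<exists>d>0. \<forall>s t. \<bar>s\<bar> < d \<and> \<bar>t\<bar> < d \<longrightarrow>
      norm (k' s t - k' s 0 - k' 0 t + k' 0 0 - (s * t) *\<^sub>R L) \<le> e * \<bar>s\<bar> * \<bar>t\<bar>"
  proof (intro exI[of _ "min d \<delta>"] conjI allI impI)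
    fix s t :: real assume st: "\<bar>s\<bar> < min d \<delta> \<and> \<bar>t\<bar> < min d \<delta>"
    then have "k' s t = k s t" "k' s 0 = k s 0" "k' 0 t = k 0 t" "k' 0 0 = k 0 0"
      using eq \<open>\<delta> > 0\<close> by (simp_all add: eq[symmetric])
    then show "norm (k' s t - k' s 0 - k' 0 t + k' 0 0 - (s * t) *\<^sub>R L) \<le> e * \<bar>s\<bar> * \<bar>t\<bar>"
      using d st by simp
  qed (use \<open>d > 0\<close> \<open>\<delta> > 0\<close> in simp)
qed

lemma local_flow_in_chart:
  assumes BM: "banach_manifold A" and LF: "local_flow A v \<phi>"
  obtains U \<psi> \<delta> where "(U, \<psi>) \<in> A" "\<delta> > 0" "\<And>t. \<bar>t\<bar> < \<delta> \<Longrightarrow> \<phi> t m \<in> U"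
    "\<And>t. \<bar>t\<bar> < \<delta> \<Longrightarrow> ((\<lambda>s. \<psi> (\<phi> s m)) has_vector_derivative v (U, \<psi>) (\<psi> (\<phi> t m))) (at t)"
    "\<And>x. x \<in> U \<Longrightarrow> inv_into U \<psi> (\<psi> x) = x"
proof -
  have "\<Union>(fst ` A) = UNIV" using BM unfolding banach_manifold_def by blast
  then obtain p where "p \<in> A" "m \<in> fst p" by blast
  then obtain U \<psi> where chart: "(U, \<psi>) \<in> A" and "m \<in> U" by (cases p) auto
  have "open U" using BM chart unfolding banach_manifold_def by blast
  obtain g where "homeomorphism U (\<psi> ` U) \<psi> g" using BM chart unfolding banach_manifold_def by blast
  then have "inj_on \<psi> U" by (metis homeomorphism_def inj_on_inverseI)
  then have inv: "\<And>x. x \<in> U \<Longrightarrow> inv_into U \<psi> (\<psi> x) = x" by simp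
  obtain \<epsilon> where "\<epsilon> > 0" and cont: "continuous_on {-\<epsilon><..<\<epsilon>} (\<lambda>t. \<phi> t m)"
    and flow: "\<forall>t\<in>{-\<epsilon><..<\<epsilon>}. \<forall>(U, \<psi>)\<in>A. \<phi> t m \<in> U \<longrightarrow>
      ((\<lambda>s. \<psi> (\<phi> s m)) has_vector_derivative v (U, \<psi>) (\<psi> (\<phi> t m))) (at t)"
    using LF unfolding local_flow_def by blast
  have "\<phi> 0 m = m" using LF unfolding local_flow_def by blast
  moreover have "isCont (\<lambda>t. \<phi> t m) 0"
    using cont \<open>\<epsilon> > 0\<close> continuous_on_eq_continuous_at[OF open_greaterThanLessThan] by force
  ultimately have "\<forall>\<^sub>F t in at 0. \<phi> t m \<in> U"
    using \<open>open U\<close> \<open>m \<in> U\<close> unfolding isCont_def by (metis topological_tendstoD)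
  then obtain d where "d > 0" and d: "\<And>t. t \<noteq> 0 \<Longrightarrow> \<bar>t\<bar> < d \<Longrightarrow> \<phi> t m \<in> U"
    unfolding eventually_at by (auto simp: dist_real_def)
  define \<delta> where "\<delta> = min \<epsilon> d"
  have in_U: "\<phi> t m \<in> U" if "\<bar>t\<bar> < \<delta>" for t
    using d[of t] that \<open>m \<in> U\<close> \<open>\<phi> 0 m = m\<close> by (cases "t = 0") (auto simp: \<delta>_def)
  show thesis
  proof (rule that[OF chart _ in_U _ inv])
    show "\<delta> > 0" using \<open>\<epsilon> > 0\<close> \<open>d > 0\<close> by (simp add: \<delta>_def)
    show "((\<lambda>s. \<psi> (\<phi> s m)) has_vector_derivative v (U, \<psi>) (\<psi> (\<phi> t m))) (at t)" if "\<bar>t\<bar> < \<delta>" for t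
      using flow in_U[OF that] chart that by (auto simp: \<delta>_def abs_less_iff)
  qed
qed

lemma mixed_expansion_along_curve:
  fixes \<kappa> :: "'a::real_normed_vector \<times> 'a \<Rightarrow> 'b::real_normed_vector" and c w :: "real \<Rightarrow> 'a"
  assumes tower: "frechet_tower W \<kappa> F" and W: "open W" and "\<delta> > 0"
    and c: "\<And>t. \<bar>t\<bar> < \<delta> \<Longrightarrow> (c has_vector_derivative w t) (at t)"
    and cW: "\<And>\<sigma> \<tau>. \<bar>\<sigma>\<bar> < \<delta> \<Longrightarrow> \<bar>\<tau>\<bar> < \<delta> \<Longrightarrow> (c \<tau>, c \<sigma>) \<in> W"
    and w: "isCont w 0"
  shows "mixed_difference_expansion (\<lambda>\<sigma> \<tau>. \<kappa> (c \<tau>, c \<sigma>)) (F 2 (c 0, c 0) [(w 0, 0), (0, w 0)])"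
proof -
  define G where "G \<sigma> \<tau> = F 1 (c \<tau>, c \<sigma>) [(0, w \<sigma>)]" for \<sigma> \<tau>
  define M where "M \<sigma> \<tau> = F 2 (c \<tau>, c \<sigma>) [(w \<tau>, 0), (0, w \<sigma>)]" for \<sigma> \<tau>
  have deriv1: "((\<lambda>\<sigma>. \<kappa> (c \<tau>, c \<sigma>)) has_vector_derivative G \<sigma> \<tau>) (at \<sigma>)"
    if "\<bar>\<sigma>\<bar> < \<delta>" "\<bar>\<tau>\<bar> < \<delta>" for \<sigma> \<tau>
  proof -
    have "((\<lambda>\<sigma>. (c \<tau>, c \<sigma>)) has_vector_derivative (0, w \<sigma>)) (at \<sigma>)"
      by (rule has_vector_derivative_Pair[OF has_vector_derivative_const c[OF that(1)]])
    from vector_derivative_diff_chain_within[OF this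
        has_derivative_at_withinI[OF frechet_tower_has_derivative[OF tower W cW[OF that]]]]
    show ?thesis by (simp add: G_def o_def)
  qed
  have deriv2: "((\<lambda>\<tau>. G \<sigma> \<tau>) has_vector_derivative M \<sigma> \<tau>) (at \<tau>)"
    if "\<bar>\<sigma>\<bar> < \<delta>" "\<bar>\<tau>\<bar> < \<delta>" for \<sigma> \<tau>
  proof -
    have "((\<lambda>\<tau>. (c \<tau>, c \<sigma>)) has_vector_derivative (w \<tau>, 0)) (at \<tau>)"
      by (rule has_vector_derivative_Pair[OF c[OF that(2)] has_vector_derivative_const])
    from vector_derivative_diff_chain_within[OF this
        has_derivative_at_withinI[OF frechet_tower_deriv_has_derivative[OF tower W cW[OF that]]]]
    show ?thesis by (simp add: G_def M_def o_def)
  qed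
  have "isCont (\<lambda>z. M (fst z) (snd z)) (0, 0)"
  proof -
    define P where "P z = (c (snd z), c (fst z))" for z :: "real \<times> real"
    have p0: "(c 0, c 0) \<in> W" using cW \<open>\<delta> > 0\<close> by simp
    have "isCont c 0" using c[of 0] \<open>\<delta> > 0\<close> by (simp add: has_vector_derivative_continuous)
    have fst: "((\<lambda>z. fst z) \<longlongrightarrow> 0) (at (0::real, 0::real))"
      and snd: "((\<lambda>z. snd z) \<longlongrightarrow> 0) (at (0::real, 0::real))"
      using tendsto_fst[OF tendsto_ident_at[of "(0::real, 0::real)" UNIV]]
        tendsto_snd[OF tendsto_ident_at[of "(0::real, 0::real)" UNIV]] by simp_all
    have P: "(P \<longlongrightarrow> (c 0, c 0)) (at (0, 0))"
      unfolding P_def using isCont_tendsto_compose[OF \<open>isCont c 0\<close>] fst snd by (intro tendsto_Pair)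
    have near: "\<forall>\<^sub>F z in at (0, 0). \<bar>fst z\<bar> < \<delta> \<and> \<bar>snd z\<bar> < \<delta>"
      using eventually_at_in_open'[of "{-\<delta><..<\<delta>} \<times> {-\<delta><..<\<delta>}" "(0, 0)"] \<open>\<delta> > 0\<close>
      by (auto simp: open_Times abs_less_iff elim!: eventually_mono)
    obtain C where C: "\<And>a b. norm (F 2 (c 0, c 0) [a, b]) \<le> C * norm a * norm b"
      using frechet_tower_second_bilinear[OF tower W p0] by blast
    have "((\<lambda>z. F 2 (P z) [(w (snd z), 0), (0, w (fst z))]) \<longlongrightarrow> F 2 (c 0, c 0) [(w 0, 0), (0, w 0)])
        (at (0, 0))"
    proof (rule tendsto_bilinear_family[OF _ _ _ _ _ _ C])
      show "((\<lambda>z. (w (snd z), 0)) \<longlongrightarrow> (w 0, 0)) (at (0::real, 0::real))"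
        "((\<lambda>z. (0, w (fst z))) \<longlongrightarrow> (0, w 0)) (at (0::real, 0::real))"
        using isCont_tendsto_compose[OF w fst] isCont_tendsto_compose[OF w snd] by (auto intro!: tendsto_Pair)
      show "((\<lambda>z. mlnorm 2 (\<lambda>vs. F 2 (P z) vs - F 2 (c 0, c 0) vs)) \<longlongrightarrow> 0) (at (0, 0))"
        using isCont_tendsto_compose[OF frechet_tower_second_isCont[OF tower W p0] P]
        by (simp add: mlnorm_zero)
      show "\<forall>\<^sub>F z in at (0, 0). \<forall>a b. norm (F 2 (P z) [a, b] - F 2 (c 0, c 0) [a, b])
          \<le> mlnorm 2 (\<lambda>vs. F 2 (P z) vs - F 2 (c 0, c 0) vs) * norm a * norm b"
        using near by eventually_elim
          (auto simp: P_def intro!: frechet_tower_second_diff_le[OF tower W p0] cW)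
      show "linear (\<lambda>h. F 2 (c 0, c 0) [h, b])" "linear (\<lambda>h. F 2 (c 0, c 0) [a, h])" for a b
        using frechet_tower_second_bilinear[OF tower W p0] by blast+
    qed
    then show ?thesis unfolding isCont_def M_def P_def by simp
  qed
  from mixed_difference_expansionI[OF \<open>\<delta> > 0\<close> deriv1 deriv2 this]
  show ?thesis by (simp add: M_def)
qed

lemma kernel_along_flow_mixed_expansion:
  fixes A :: "('m::topological_space, 'e::banach) chart set" and K :: "'m \<Rightarrow> 'm \<Rightarrow> complex"
  assumes BM: "banach_manifold A" and SK: "smooth_kernel A K"
    and VF: "vector_field A v" and LF: "local_flow A v \<phi>"
  shows "\<exists>L. mixed_difference_expansion (\<lambda>s t. K (\<phi> t m) (\<phi> s m)) L"
proof -
  obtain U \<psi> \<delta> where chart: "(U, \<psi>) \<in> A" and "\<delta> > 0" and in_U: "\<And>t. \<bar>t\<bar> < \<delta> \<Longrightarrow> \<phi> t m \<in> U"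
    and c: "\<And>t. \<bar>t\<bar> < \<delta> \<Longrightarrow> ((\<lambda>s. \<psi> (\<phi> s m)) has_vector_derivative v (U, \<psi>) (\<psi> (\<phi> t m))) (at t)"
    and inv: "\<And>x. x \<in> U \<Longrightarrow> inv_into U \<psi> (\<psi> x) = x"
    using local_flow_in_chart[OF BM LF] by blast
  define c where "c t = \<psi> (\<phi> t m)" for t
  define \<kappa> where "\<kappa> = (\<lambda>(x, y). K (inv_into U \<psi> x) (inv_into U \<psi> y))"
  have "\<forall>(V, \<rho>)\<in>A. smooth_on (\<psi> ` U \<times> \<rho> ` V) (\<lambda>(x, y). K (inv_into U \<psi> x) (inv_into V \<rho> y))"
    using bspec[OF SK[unfolded smooth_kernel_def] chart] by simp
  from bspec[OF this chart] have "smooth_on (\<psi> ` U \<times> \<psi> ` U) \<kappa>" by (simp add: \<kappa>_def)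
  then obtain F where tower: "frechet_tower (\<psi> ` U \<times> \<psi> ` U) \<kappa> F" and W: "open (\<psi> ` U \<times> \<psi> ` U)"
    unfolding smooth_on_iff_frechet_tower by blast
  have "smooth_on (\<psi> ` U) (v (U, \<psi>))"
    using bspec[OF conjunct1[OF VF[unfolded vector_field_def]] chart] by simp
  then obtain FV where "frechet_tower (\<psi> ` U) (v (U, \<psi>)) FV" and "open (\<psi> ` U)"
    unfolding smooth_on_iff_frechet_tower by blast
  from frechet_tower_has_derivative[OF this] in_U[of 0] \<open>\<delta> > 0\<close>
  have "isCont (v (U, \<psi>)) (c 0)" unfolding c_def by (auto intro: has_derivative_continuous)
  moreover have "isCont c 0"
    using c[of 0] \<open>\<delta> > 0\<close> unfolding c_def by (simp add: has_vector_derivative_continuous)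
  ultimately have w: "isCont (\<lambda>t. v (U, \<psi>) (c t)) 0" by (simp add: isCont_o2)
  have expansion: "mixed_difference_expansion (\<lambda>\<sigma> \<tau>. \<kappa> (c \<tau>, c \<sigma>)) (F 2 (c 0, c 0) [(v (U, \<psi>) (c 0), 0), (0, v (U, \<psi>) (c 0))])"
    by (rule mixed_expansion_along_curve[OF tower W \<open>\<delta> > 0\<close> _ _ w]) (auto simp: c_def c in_U)
  have "\<kappa> (c \<tau>, c \<sigma>) = K (\<phi> \<tau> m) (\<phi> \<sigma> m)" if "\<bar>\<sigma>\<bar> < \<delta>" "\<bar>\<tau>\<bar> < \<delta>" for \<sigma> \<tau>
    using that by (simp add: \<kappa>_def c_def inv in_U)
  from mixed_difference_expansion_cong[OF \<open>\<delta> > 0\<close> this expansion] show ?thesis ..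
qed

section \<open>The Lie derivative on the reproducing kernel Hilbert space\<close>

context rkhs_space
begin

lemma lie_eq_inner:
  assumes "D \<in> H" and "H_has_derivative_at0 ip (\<lambda>t x. K x (\<phi> t m)) D" and "f \<in> H"
  shows "lie \<phi> f m = ip f D"
proof -
  have "((\<lambda>t. ip f (\<lambda>x. K x (\<phi> t m))) has_vector_derivative ip f D) (at 0)"
    using H_has_derivative_at0_inner[OF kernel_mem assms] .
  then have "((\<lambda>t. f (\<phi> t m)) has_vector_derivative ip f D) (at 0)"
    using \<open>f \<in> H\<close> by (simp add: reproducing)
  then show ?thesis unfolding lie_def by (rule vector_derivative_at)
qed

lemma kernel_derivative_eq_lie:
  assumes symmetric: "K_symmetric \<phi> K" and "\<And>m. D m \<in> H"
    and lie: "\<And>f m. f \<in> H \<Longrightarrow> lie \<phi> f m = ip f (D m)"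
  shows "D m = lie \<phi> (\<lambda>x. K x m)"
proof
  fix n
  have "D m n = cnj (ip (\<lambda>x. K x n) (D m))"
    using reproducing[OF assms(2)] inner_commute[OF kernel_mem[of n] assms(2)[of m]] by simp
  also have "\<dots> = cnj (lie \<phi> (\<lambda>x. K x n) m)" by (simp add: lie kernel_mem)
  also have "\<dots> = lie \<phi> (\<lambda>x. K x m) n"
    using symmetric[unfolded K_symmetric_def, rule_format, of m n] by simp
  finally show "D m n = lie \<phi> (\<lambda>x. K x m) n" .
qed

context
  fixes \<phi> :: "real \<Rightarrow> 'm \<Rightarrow> 'm"
  assumes lie_kernel_mem: "\<And>m. lie \<phi> (\<lambda>x. K x m) \<in> H"
    and lie_inner: "\<And>f m. f \<in> H \<Longrightarrow> lie \<phi> f m = ip f (lie \<phi> (\<lambda>x. K x m))"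
begin

lemma lie_kernel_sum:
  "lie \<phi> (\<lambda>x. \<Sum>j<(n::nat). c j * K x (ms j)) = (\<lambda>y. \<Sum>j<n. c j * lie \<phi> (\<lambda>x. K x (ms j)) y)"
proof
  fix y
  have "lie \<phi> (\<lambda>x. \<Sum>j<n. c j * K x (ms j)) y
      = cnj (ip (lie \<phi> (\<lambda>x. K x y)) (\<lambda>x. \<Sum>j<n. c j * K x (ms j)))"
    by (simp add: lie_inner sum_mem kernel_mem lie_kernel_mem inner_commute[of _ "lie \<phi> (\<lambda>x. K x y)"])
  also have "\<dots> = (\<Sum>j<n. c j * cnj (ip (lie \<phi> (\<lambda>x. K x y)) (\<lambda>x. K x (ms j))))"
    by (simp add: inner_sum_right kernel_mem lie_kernel_mem)
  also have "\<dots> = (\<Sum>j<n. c j * lie \<phi> (\<lambda>x. K x (ms j)) y)"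
    by (simp add: lie_inner kernel_mem lie_kernel_mem inner_commute[of "lie \<phi> (\<lambda>x. K x y)"])
  finally show "lie \<phi> (\<lambda>x. \<Sum>j<n. c j * K x (ms j)) y = (\<Sum>j<n. c j * lie \<phi> (\<lambda>x. K x (ms j)) y)" .
qed

lemma kspan_subset_lie_domain: "kspan K \<subseteq> lie_domain H \<phi>"
  unfolding kspan_def lie_domain_def
  by (auto simp: lie_kernel_sum intro!: sum_mem kernel_mem lie_kernel_mem)

lemma lie_symmetric_on_kspan:
  assumes "f \<in> kspan K" and "g \<in> kspan K"
  shows "ip (lie \<phi> f) g = ip f (lie \<phi> g)"
proof -
  have f: "f \<in> H" and lie_f: "lie \<phi> f \<in> H"
    using kspan_subset_lie_domain \<open>f \<in> kspan K\<close> unfolding lie_domain_def by auto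
  obtain n d ns where g: "g = (\<lambda>x. \<Sum>j<(n::nat). d j * K x (ns j))"
    using \<open>g \<in> kspan K\<close> unfolding kspan_def by blast
  have "ip (lie \<phi> f) g = (\<Sum>j<n. cnj (d j) * lie \<phi> f (ns j))"
    unfolding g using lie_f by (simp add: inner_sum_right kernel_mem reproducing)
  also have "\<dots> = ip f (lie \<phi> g)"
    unfolding g lie_kernel_sum using f by (simp add: inner_sum_right lie_kernel_mem lie_inner)
  finally show ?thesis .
qed

end

end

theorem proposition2p2:
  fixes A :: "('m::topological_space, 'e::banach) chart set"
    and K :: "'m \<Rightarrow> 'm \<Rightarrow> complex"
    and H :: "('m \<Rightarrow> complex) set"
    and ip :: "('m \<Rightarrow> complex) \<Rightarrow> ('m \<Rightarrow> complex) \<Rightarrow> complex"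
    and v :: "('m, 'e) chart \<Rightarrow> 'e \<Rightarrow> 'e"
    and \<phi> :: "real \<Rightarrow> 'm \<Rightarrow> 'm"
  assumes "banach_manifold A"
    and "smooth_kernel A K"
    and "pos_def_kernel K"
    and "rkhs K H ip"
    and "\<forall>f\<in>H. smooth_fun A f"
    and "vector_field A v"
    and "local_flow A v \<phi>"
    and "K_symmetric \<phi> K"
  shows "(\<forall>m. lie \<phi> (\<lambda>x. K x m) \<in> H \<and>
              H_has_derivative_at0 ip (\<lambda>t x. K x (\<phi> t m)) (lie \<phi> (\<lambda>x. K x m)))
       \<and> kspan K \<subseteq> lie_domain H \<phi>
       \<and> (\<forall>f\<in>kspan K. \<forall>g\<in>kspan K. ip (lie \<phi> f) g = ip f (lie \<phi> g))
       \<and> (\<forall>f\<in>H. \<forall>m. ip f (lie \<phi> (\<lambda>x. K x m)) = lie \<phi> f m)"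
proof -
  interpret rkhs_space K H ip by (rule rkhs_space.intro) fact
  have "\<exists>D\<in>H. H_has_derivative_at0 ip (\<lambda>t x. K x (\<phi> t m)) D" for m
  proof -
    obtain L where "mixed_difference_expansion (\<lambda>s t. K (\<phi> t m) (\<phi> s m)) L"
      using kernel_along_flow_mixed_expansion assms(1,2,6,7) by blast
    then show ?thesis
      by (intro mixed_expansion_imp_has_derivative[where L=L]) (simp_all add: kernel_mem reproducing)
  qed
  then obtain D where D: "\<And>m. D m \<in> H" "\<And>m. H_has_derivative_at0 ip (\<lambda>t x. K x (\<phi> t m)) (D m)"
    by metis
  have lie: "lie \<phi> f m = ip f (D m)" if "f \<in> H" for f m
    using lie_eq_inner[OF D that] .
  have D_lie: "D = (\<lambda>m. lie \<phi> (\<lambda>x. K x m))"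
    using kernel_derivative_eq_lie[OF assms(8) D(1) lie] by blast
  show ?thesis
    using D lie kspan_subset_lie_domain lie_symmetric_on_kspan unfolding D_lie by auto
qed

end
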